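(* Let $p\in\{2,3\}$. Then for every integer $d\ge 1$, the directed graph $G_d$ is connected (as an undirected graph).
   Context: Fix a prime $p$ and an integer $d\ge1$. Let $\Omega_d$ be the set of partitions (unordered multisets) of $d+2$ into positive integers $e_1,e_2,\ldots$ with each $e_j\not\equiv 1\pmod p$. For $\vec E,\vec E'\in\Omega_d$ write $\vec E\prec\vec E'$ if $\vec E'$ is a refinement of $\vec E$ (i.e. $\vec E'$ is obtained by replacing each entry of $\vec E$ by a multiset of positive integers summing to it). $G_d$ is the directed graph with vertex set $\Omega_d$ and an edge from $\vec E$ to $\vec E'$ if and only if $\vec E\prec\vec E'$, $\vec E\neq\vec E'$, and there is no partition in $\Omega_d$ lying strictly between them. *)

theory Defs
  imports Main "HOL-Library.Multiset" "HOL-Computational_Algebra.Primes"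
begin

definition Omega :: "nat \<Rightarrow> nat \<Rightarrow> nat multiset set" where
  "Omega p d = {E. (\<forall>e \<in># E. 0 < e \<and> e mod p \<noteq> 1 mod p) \<and> sum_mset E = d + 2}"

definition refines :: "nat multiset \<Rightarrow> nat multiset \<Rightarrow> bool" where
  "refines E E' \<longleftrightarrow> (\<exists>F :: nat multiset multiset.
      image_mset sum_mset F = E \<and>
      (\<forall>M \<in># F. M \<noteq> {#} \<and> (\<forall>x \<in># M. 0 < x)) \<and>
      sum_mset F = E')"

definition G_edges :: "nat \<Rightarrow> nat \<Rightarrow> (nat multiset \<times> nat multiset) set" where
  "G_edges p d = {(E, E'). E \<in> Omega p d \<and> E' \<in> Omega p d \<and> refines E E' \<and> E \<noteq> E' \<and>
      \<not> (\<exists>E'' \<in> Omega p d. refines E E'' \<and> refines E'' E' \<and> E'' \<noteq> E \<and> E'' \<noteq> E')}"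

definition G_connected :: "nat \<Rightarrow> nat \<Rightarrow> bool" where
  "G_connected p d \<longleftrightarrow>
     (\<forall>E \<in> Omega p d. \<forall>E' \<in> Omega p d. (E, E') \<in> (G_edges p d \<union> (G_edges p d)\<inverse>)\<^sup>*)"

end

theory Submission
  imports Defs
begin

text \<open>A partition in \<open>\<Omega>\<^sub>d\<close> is linked in \<open>G\<^sub>d\<close> to each of its refinements in \<open>\<Omega>\<^sub>d\<close>:
  refinement strictly increases the number of parts, so a refinement chain can be saturated
  into a chain of covering pairs. For \<open>p = 2\<close> all parts are even and split into \<open>2\<close>s, so
  every partition is linked to \<open>2 + \<dots> + 2\<close>. For \<open>p = 3\<close> every part is \<open>0\<close> or \<open>2\<close> modulo
  \<open>3\<close> and splits into \<open>2\<close>s and \<open>3\<close>s. Since \<open>3 + 3\<close> and \<open>2 + 2 + 2\<close> both refine a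
  part \<open>6\<close>, pairs of \<open>3\<close>s can be traded for triples of \<open>2\<close>s until at most one \<open>3\<close>
  is left, and the resulting partition depends only on \<open>d\<close>.\<close>

lemma sum_mset_Union_mset:
  fixes F :: "'a::comm_monoid_add multiset multiset"
  shows "sum_mset (\<Sum>\<^sub># F) = (\<Sum>M\<in>#F. sum_mset M)"
  by (induction F) auto

lemma Union_mset_singletons:
  fixes F :: "'a::comm_monoid_add multiset multiset"
  assumes "\<And>M. M \<in># F \<Longrightarrow> size M = 1"
  shows "\<Sum>\<^sub># F = image_mset sum_mset F"
  using assms
proof (induction F)
  case (add M F)
  then obtain a where "M = {#a#}"
    using size_1_singleton_mset by auto
  with add show ?case by auto
qed simp

lemma set_mset_subset_doubletonD:
  assumes "set_mset A \<subseteq> {x, y}" "x \<noteq> y"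
  shows "A = replicate_mset (count A x) x + replicate_mset (count A y) y"
proof (rule multiset_eqI)
  fix z show "count A z = count (replicate_mset (count A x) x + replicate_mset (count A y) y) z"
    using assms by (auto simp: subset_iff not_in_iff[symmetric])
qed

lemma refines_sum_mset_eq: "refines E E' \<Longrightarrow> sum_mset E' = sum_mset E"
  unfolding refines_def by (auto simp: sum_mset_Union_mset)

lemma refines_size_less:
  assumes "refines E E'" "E \<noteq> E'"
  shows "size E < size E'"
proof -
  obtain F where F: "image_mset sum_mset F = E" "\<forall>M\<in>#F. M \<noteq> {#} \<and> (\<forall>x\<in>#M. 0 < x)"
    "\<Sum>\<^sub># F = E'"
    using assms(1) unfolding refines_def by blast
  have "\<exists>M\<in>#F. size M \<noteq> 1"
  proof (rule ccontr)
    assume "\<not> (\<exists>M\<in>#F. size M \<noteq> 1)"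
    then have "\<Sum>\<^sub># F = image_mset sum_mset F"
      by (intro Union_mset_singletons) blast
    with F(1,3) assms(2) show False
      by simp
  qed
  then obtain M where M: "M \<in># F" "size M \<noteq> 1"
    by blast
  moreover have "M \<noteq> {#}"
    using F(2) M(1) by blast
  ultimately have "2 \<le> size M"
    by (cases "size M") auto
  obtain F' where F': "F = add_mset M F'"
    using mset_add[OF M(1)] by blast
  have "size F' = (\<Sum>N\<in>#F'. 1)"
    by (rule size_eq_sum_mset)
  also have "\<dots> \<le> (\<Sum>N\<in>#F'. size N)"
    by (rule sum_mset_mono) (use F(2) F' in \<open>auto simp: Suc_le_eq nonempty_has_size\<close>)
  finally have "size F' \<le> (\<Sum>N\<in>#F'. size N)" .
  with \<open>2 \<le> size M\<close> show ?thesis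
    unfolding F(1)[symmetric] F(3)[symmetric] F' by simp
qed

lemma refines_Union_image:
  assumes "\<And>e. e \<in># E \<Longrightarrow> sum_mset (f e) = e \<and> f e \<noteq> {#} \<and> (\<forall>x\<in>#f e. 0 < x)"
  shows "refines E (\<Sum>e\<in>#E. f e)"
  unfolding refines_def
proof (intro exI[of _ "image_mset f E"] conjI)
  show "image_mset sum_mset (image_mset f E) = E"
    using assms by (induction E) auto
qed (use assms in auto)

lemma refines_add_mset:
  assumes "sum_mset M = e" "M \<noteq> {#}" "\<forall>x\<in>#M. 0 < x" "\<forall>x\<in>#X. 0 < x"
  shows "refines (add_mset e X) (M + X)"
  unfolding refines_def
  by (rule exI[of _ "add_mset M (image_mset (\<lambda>x. {#x#}) X)"])
    (use assms in \<open>auto simp: multiset.map_comp comp_def\<close>)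

definition G_linked :: "nat \<Rightarrow> nat \<Rightarrow> (nat multiset \<times> nat multiset) set" where
  "G_linked p d = (G_edges p d \<union> (G_edges p d)\<inverse>)\<^sup>*"

lemma G_linked_sym: "(E, E') \<in> G_linked p d \<Longrightarrow> (E', E) \<in> G_linked p d"
  unfolding G_linked_def by (rule symD[OF sym_rtrancl[OF sym_Un_converse]])

lemma G_linked_trans:
  "(E, E') \<in> G_linked p d \<Longrightarrow> (E', E'') \<in> G_linked p d \<Longrightarrow> (E, E'') \<in> G_linked p d"
  unfolding G_linked_def by (rule rtrancl_trans)

lemma G_linked_common:
  "(E, C) \<in> G_linked p d \<Longrightarrow> (E', C) \<in> G_linked p d \<Longrightarrow> (E, E') \<in> G_linked p d"
  by (blast intro: G_linked_trans G_linked_sym)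

lemma refines_imp_G_linked:
  assumes "E \<in> Omega p d" "E' \<in> Omega p d" "refines E E'"
  shows "(E, E') \<in> G_linked p d"
  using assms
proof (induction "size E' - size E" arbitrary: E E' rule: less_induct)
  case less
  show ?case
  proof (cases "\<exists>E'' \<in> Omega p d. refines E E'' \<and> refines E'' E' \<and> E'' \<noteq> E \<and> E'' \<noteq> E'")
    case True
    then obtain E'' where E'': "E'' \<in> Omega p d" "refines E E''" "refines E'' E'" "E'' \<noteq> E" "E'' \<noteq> E'"
      by blast
    have "size E < size E''" "size E'' < size E'"
      using refines_size_less[OF E''(2)] refines_size_less[OF E''(3)] E''(4,5) by auto
    then have "(E, E'') \<in> G_linked p d" "(E'', E') \<in> G_linked p d"
      using less E'' by simp_all
    then show ?thesis
      by (rule G_linked_trans)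
  next
    case False
    then have "E = E' \<or> (E, E') \<in> G_edges p d"
      using less.prems unfolding G_edges_def by blast
    then show ?thesis
      unfolding G_linked_def by blast
  qed
qed

lemma Omega_2_linked_to_twos:
  assumes "E \<in> Omega 2 d"
  shows "(E, replicate_mset ((d + 2) div 2) 2) \<in> G_linked 2 d"
proof -
  define N where "N = (\<Sum>e\<in>#E. replicate_mset (e div 2) (2::nat))"
  have "sum_mset (replicate_mset (e div 2) 2) = e \<and> replicate_mset (e div 2) 2 \<noteq> {#} \<and>
      (\<forall>x\<in>#replicate_mset (e div 2) (2::nat). 0 < x)" if "e \<in># E" for e
  proof -
    have "0 < e" "e mod 2 = 0"
      using assms that by (auto simp: Omega_def)
    then have "0 < e div 2 \<and> e div 2 * 2 = e"
      using mod_mult_div_eq[of e 2] by linarith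
    then show ?thesis
      by auto
  qed
  then have "refines E N"
    unfolding N_def by (rule refines_Union_image)
  then have sum_N: "sum_mset N = d + 2"
    using assms refines_sum_mset_eq by (simp add: Omega_def)
  have "set_mset N \<subseteq> {2}"
    unfolding N_def by auto
  then have N_size: "N = replicate_mset (size N) 2"
    by (rule set_mset_subset_singletonD)
  have "size N = (d + 2) div 2"
    using sum_N by (subst (asm) N_size) simp
  with N_size have N: "N = replicate_mset ((d + 2) div 2) 2"
    by (simp only:)
  have "N \<in> Omega 2 d"
    using sum_N unfolding N Omega_def by auto
  from refines_imp_G_linked[OF assms this \<open>refines E N\<close>] show ?thesis
    unfolding N .
qed

definition twos_threes :: "nat \<Rightarrow> nat \<Rightarrow> nat multiset" where
  "twos_threes a b = replicate_mset a 2 + replicate_mset b 3"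

lemma twos_threes_in_Omega: "2 * a + 3 * b = d + 2 \<Longrightarrow> twos_threes a b \<in> Omega 3 d"
  unfolding Omega_def twos_threes_def by auto

text \<open>Both sides refine the partition obtained by merging the exchanged parts into a
  single part \<open>6\<close>, which is allowed since \<open>6 \<noteq> 1 (mod 3)\<close>.\<close>
lemma twos_threes_exchange:
  assumes "2 * a + 3 * (b + 2) = d + 2"
  shows "(twos_threes a (b + 2), twos_threes (a + 3) b) \<in> G_linked 3 d"
proof -
  define X where "X = twos_threes a b"
  have X_pos: "\<forall>x\<in>#X. 0 < x"
    unfolding X_def twos_threes_def by auto
  have six: "add_mset 6 X \<in> Omega 3 d"
    using assms unfolding X_def Omega_def twos_threes_def by auto
  have "refines (add_mset 6 X) ({#3, 3#} + X)" "refines (add_mset 6 X) ({#2, 2, 2#} + X)"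
    by (rule refines_add_mset; use X_pos in simp)+
  moreover have "twos_threes a (b + 2) = {#3, 3#} + X" "twos_threes (a + 3) b = {#2, 2, 2#} + X"
    unfolding X_def twos_threes_def by (simp_all add: numeral_3_eq_3)
  moreover have "twos_threes a (b + 2) \<in> Omega 3 d" "twos_threes (a + 3) b \<in> Omega 3 d"
    using assms by (auto intro: twos_threes_in_Omega)
  ultimately have "(add_mset 6 X, twos_threes a (b + 2)) \<in> G_linked 3 d"
    "(add_mset 6 X, twos_threes (a + 3) b) \<in> G_linked 3 d"
    using refines_imp_G_linked[OF six] by simp_all
  then show ?thesis
    by (blast intro: G_linked_trans G_linked_sym)
qed

lemma twos_threes_exchange_iter:
  "2 * a + 3 * (b + 2 * k) = d + 2 \<Longrightarrow>
    (twos_threes a (b + 2 * k), twos_threes (a + 3 * k) b) \<in> G_linked 3 d"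
proof (induction k arbitrary: a)
  case 0
  then show ?case
    unfolding G_linked_def by simp
next
  case (Suc k)
  have "(twos_threes a (b + 2 * k + 2), twos_threes (a + 3) (b + 2 * k)) \<in> G_linked 3 d"
    using Suc.prems by (intro twos_threes_exchange) simp
  moreover have "(twos_threes (a + 3) (b + 2 * k), twos_threes (a + 3 + 3 * k) b) \<in> G_linked 3 d"
    using Suc.prems by (intro Suc.IH) simp
  ultimately have "(twos_threes a (b + 2 * k + 2), twos_threes (a + 3 + 3 * k) b) \<in> G_linked 3 d"
    by (rule G_linked_trans)
  moreover have "b + 2 * Suc k = b + 2 * k + 2" "a + 3 * Suc k = a + 3 + 3 * k"
    by simp_all
  ultimately show ?case
    by (simp only:)
qed

lemma two_three_combination_unique:
  fixes x r x' r' :: nat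
  assumes "2 * x + 3 * r = 2 * x' + 3 * r'" "r < 2" "r' < 2"
  shows "r = r' \<and> x = x'"
  using assms by presburger

text \<open>Trading pairs of threes for triples of twos leads to at most one three, and then
  the parity of \<open>d + 2\<close> determines the partition.\<close>
lemma twos_threes_linked:
  assumes "2 * a + 3 * b = d + 2" "2 * a' + 3 * b' = d + 2"
  shows "(twos_threes a b, twos_threes a' b') \<in> G_linked 3 d"
proof -
  have reduce: "(twos_threes a b, twos_threes (a + 3 * (b div 2)) (b mod 2)) \<in> G_linked 3 d"
    if "2 * a + 3 * b = d + 2" for a b
    using twos_threes_exchange_iter[of a "b mod 2" "b div 2" d] that unfolding mod_mult_div_eq .
  have "2 * (a + 3 * (b div 2)) + 3 * (b mod 2) = 2 * (a' + 3 * (b' div 2)) + 3 * (b' mod 2)"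
    using assms mod_mult_div_eq[of b 2] mod_mult_div_eq[of b' 2] by (simp only: distrib_left)
  then have "b mod 2 = b' mod 2 \<and> a + 3 * (b div 2) = a' + 3 * (b' div 2)"
    by (rule two_three_combination_unique) simp_all
  then have "twos_threes (a + 3 * (b div 2)) (b mod 2) = twos_threes (a' + 3 * (b' div 2)) (b' mod 2)"
    by simp
  then show ?thesis
    using reduce[OF assms(1)] reduce[OF assms(2)] by (metis G_linked_common)
qed

lemma Omega_3_linked_to_twos_threes:
  assumes "E \<in> Omega 3 d"
  obtains a b where "2 * a + 3 * b = d + 2" "(E, twos_threes a b) \<in> G_linked 3 d"
proof -
  define split where "split e = (if e mod 3 = 0 then replicate_mset (e div 3) (3::nat)
    else add_mset 2 (replicate_mset (e div 3) 3))" for e :: nat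
  define N where "N = (\<Sum>e\<in>#E. split e)"
  have "sum_mset (split e) = e \<and> split e \<noteq> {#} \<and> (\<forall>x\<in>#split e. 0 < x)" if "e \<in># E" for e
  proof -
    have "0 < e" "e mod 3 \<noteq> 1"
      using assms that by (auto simp: Omega_def)
    then have "e mod 3 = 0 \<and> 0 < e div 3 \<and> 3 * (e div 3) = e \<or>
        e mod 3 = 2 \<and> 2 + 3 * (e div 3) = e"
      using mod_mult_div_eq[of e 3] mod_less_divisor[of 3 e] by linarith
    then show ?thesis
      unfolding split_def by auto
  qed
  then have "refines E N"
    unfolding N_def by (rule refines_Union_image)
  then have sum_N: "sum_mset N = d + 2"
    using assms refines_sum_mset_eq by (simp add: Omega_def)
  have "set_mset N \<subseteq> {2, 3}"
    unfolding N_def split_def by auto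
  then have N: "N = twos_threes (count N 2) (count N 3)"
    unfolding twos_threes_def by (rule set_mset_subset_doubletonD) simp
  have sum: "2 * count N 2 + 3 * count N 3 = d + 2"
    using sum_N by (subst (asm) N) (simp add: twos_threes_def)
  then have "N \<in> Omega 3 d"
    by (subst N) (rule twos_threes_in_Omega)
  from refines_imp_G_linked[OF assms this \<open>refines E N\<close>] have "(E, N) \<in> G_linked 3 d" .
  with sum show ?thesis
    by (subst (asm) N) (rule that)
qed

lemma Omega_2_linked:
  assumes "E \<in> Omega 2 d" "E' \<in> Omega 2 d"
  shows "(E, E') \<in> G_linked 2 d"
  using Omega_2_linked_to_twos[OF assms(1)] Omega_2_linked_to_twos[OF assms(2)]
  by (rule G_linked_common)

lemma Omega_3_linked:
  assumes "E \<in> Omega 3 d" "E' \<in> Omega 3 d"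
  shows "(E, E') \<in> G_linked 3 d"
proof -
  obtain a b where ab: "2 * a + 3 * b = d + 2" "(E, twos_threes a b) \<in> G_linked 3 d"
    using Omega_3_linked_to_twos_threes[OF assms(1)] .
  obtain a' b' where ab': "2 * a' + 3 * b' = d + 2" "(E', twos_threes a' b') \<in> G_linked 3 d"
    using Omega_3_linked_to_twos_threes[OF assms(2)] .
  have "(E, twos_threes a' b') \<in> G_linked 3 d"
    using ab(2) twos_threes_linked[OF ab(1) ab'(1)] by (rule G_linked_trans)
  then show ?thesis
    using ab'(2) by (rule G_linked_common)
qed

theorem proposition2p6:
  fixes p d :: nat
  assumes "p \<in> {2, 3}" and "d \<ge> 1"
  shows "G_connected p d"
  unfolding G_connected_def G_linked_def[symmetric]
  using assms(1) Omega_2_linked Omega_3_linked by auto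

end
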